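(* Let $X$ be a real Banach space, $A$ a non-empty subset of $X$, and $F_1,F_2$ non-empty closed bounded subsets of $X$. (1) Suppose $r(F_1,x)>r(F_2,x)$ for each $x\in A$. If $F_1$ is remotal (respectively uniquely remotal, strongly remotal, SUR, sup-compact) on $A$, then $F_1\cup F_2$ is remotal (respectively uniquely remotal, strongly remotal, SUR, sup-compact) on $A$. If in addition $\inf\{r(F_1,x)-r(F_2,x):x\in A\}>0$ and $F_1$ is USUR on $A$, then $F_1\cup F_2$ is USUR on $A$. (2) If $r(F_1,x)=r(F_2,x)$ for each $x\in A$ and $F_1,F_2$ are both sup-compact (respectively strongly remotal, remotal) on $A$, then $F_1\cup F_2$ is sup-compact (respectively strongly remotal, remotal) on $A$.
   Context: $B_X$ is the closed unit ball. For non-empty bounded $F$, $x\in X$, $\delta\ge0$: $r(F,x)=\sup_{y\in F}\|x-y\|$, $Q_F(x,\delta)=\{y\in F:\|x-y\|\ge r(F,x)-\delta\}$, $Q_F(x)=Q_F(x,0)$. On a set $A$, $F$ is: remotal if $Q_F(x)\neq\emptyset$ for each $x\in A$; uniquely remotal if $Q_F(x)$ is a singleton for each $x\in A$; strongly remotal if for every $x\in A$ and $\epsilon>0$ there is $\delta>0$ with $Q_F(x,\delta)\subseteq Q_F(x)+\epsilon B_X$; SUR if both uniquely remotal and strongly remotal; USUR if uniquely remotal and for every $\epsilon>0$ there is $\delta>0$ with $Q_F(x,\delta)\subseteq Q_F(x)+\epsilon B_X$ for all $x\in A$; sup-compact if for each $x\in A$ every sequence $(y_n)$ in $F$ with $\|x-y_n\|\to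 r(F,x)$ has a subsequence converging to an element of $F$. *)

theory Defs
  imports "HOL-Analysis.Analysis"
begin

definition farthest_dist :: "'a::real_normed_vector set \<Rightarrow> 'a \<Rightarrow> real" where
  "farthest_dist F x = (SUP y\<in>F. norm (x - y))"

definition farpts :: "'a::real_normed_vector set \<Rightarrow> 'a \<Rightarrow> real \<Rightarrow> 'a set" where
  "farpts F x \<delta> = {y \<in> F. norm (x - y) \<ge> farthest_dist F x - \<delta>}"

definition enlarge :: "'a::real_normed_vector set \<Rightarrow> real \<Rightarrow> 'a set" where
  "enlarge S \<epsilon> = {q + e | q e. q \<in> S \<and> e \<in> (\<lambda>b. \<epsilon> *\<^sub>R b) ` cball 0 1}"

definition remotal_on :: "'a::real_normed_vector set \<Rightarrow> 'a set \<Rightarrow> bool" where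
  "remotal_on F A \<longleftrightarrow> (\<forall>x\<in>A. farpts F x 0 \<noteq> {})"

definition uniquely_remotal_on :: "'a::real_normed_vector set \<Rightarrow> 'a set \<Rightarrow> bool" where
  "uniquely_remotal_on F A \<longleftrightarrow> (\<forall>x\<in>A. \<exists>y. farpts F x 0 = {y})"

definition strongly_remotal_on :: "'a::real_normed_vector set \<Rightarrow> 'a set \<Rightarrow> bool" where
  "strongly_remotal_on F A \<longleftrightarrow>
     (\<forall>x\<in>A. \<forall>\<epsilon>>0. \<exists>\<delta>>0. farpts F x \<delta> \<subseteq> enlarge (farpts F x 0) \<epsilon>)"

definition SUR_on :: "'a::real_normed_vector set \<Rightarrow> 'a set \<Rightarrow> bool" where
  "SUR_on F A \<longleftrightarrow> uniquely_remotal_on F A \<and> strongly_remotal_on F A"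

definition USUR_on :: "'a::real_normed_vector set \<Rightarrow> 'a set \<Rightarrow> bool" where
  "USUR_on F A \<longleftrightarrow> uniquely_remotal_on F A \<and>
     (\<forall>\<epsilon>>0. \<exists>\<delta>>0. \<forall>x\<in>A. farpts F x \<delta> \<subseteq> enlarge (farpts F x 0) \<epsilon>)"

definition sup_compact_on :: "'a::real_normed_vector set \<Rightarrow> 'a set \<Rightarrow> bool" where
  "sup_compact_on F A \<longleftrightarrow>
     (\<forall>x\<in>A. \<forall>y::nat \<Rightarrow> 'a. (\<forall>n. y n \<in> F) \<and>
        ((\<lambda>n. norm (x - y n)) \<longlonglongrightarrow> farthest_dist F x) \<longrightarrow>
        (\<exists>g z. strict_mono g \<and> z \<in> F \<and> (y \<circ> g) \<longlonglongrightarrow> z))"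

end

theory Submission
  imports Defs
begin

text \<open>
  If \<open>r(F\<^sub>1,x) > r(F\<^sub>2,x)\<close> and \<open>0 \<le> \<delta> < r(F\<^sub>1,x) - r(F\<^sub>2,x)\<close>, every point of \<open>F\<^sub>2\<close> is too close to
  \<open>x\<close> to be \<open>\<delta>\<close>-almost farthest in \<open>F\<^sub>1 \<union> F\<^sub>2\<close>, so \<open>Q\<^bsub>F\<^sub>1\<union>F\<^sub>2\<^esub>(x,\<delta>) = Q\<^bsub>F\<^sub>1\<^esub>(x,\<delta>)\<close> and every property
  defined through these sets passes from \<open>F\<^sub>1\<close> to the union; a positive infimum of the gap makes
  this uniform in \<open>x\<close>. Likewise a maximising sequence in the union eventually lies in \<open>F\<^sub>1\<close>.
  If \<open>r(F\<^sub>1,x) = r(F\<^sub>2,x)\<close>, then \<open>Q\<^bsub>F\<^sub>1\<union>F\<^sub>2\<^esub>(x,\<delta>) = Q\<^bsub>F\<^sub>1\<^esub>(x,\<delta>) \<union> Q\<^bsub>F\<^sub>2\<^esub>(x,\<delta>)\<close>, and a maximising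
  sequence in the union has a subsequence in one of the \<open>F\<^sub>i\<close>, which is maximising there.
\<close>

lemma bdd_above_norm_diff_image:
  fixes F :: "'a::real_normed_vector set"
  assumes "bounded F"
  shows "bdd_above ((\<lambda>y. norm (x - y)) ` F)"
proof -
  obtain a where a: "\<forall>y\<in>F. norm y \<le> a" using assms bounded_iff by blast
  have "\<forall>y\<in>F. norm (x - y) \<le> norm x + a"
    using a by (metis add_left_mono norm_triangle_ineq4 order_trans)
  then show ?thesis by (auto simp: bdd_above_def)
qed

lemma norm_diff_le_farthest_dist:
  fixes F :: "'a::real_normed_vector set"
  assumes "bounded F" "y \<in> F"
  shows "norm (x - y) \<le> farthest_dist F x"
  unfolding farthest_dist_def
  using bdd_above_norm_diff_image[OF assms(1)] assms(2) by (rule cSUP_upper2) simp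

lemma farthest_dist_Un:
  fixes F1 F2 :: "'a::real_normed_vector set"
  assumes "F1 \<noteq> {}" "F2 \<noteq> {}" "bounded F1" "bounded F2"
  shows "farthest_dist (F1 \<union> F2) x = max (farthest_dist F1 x) (farthest_dist F2 x)"
  unfolding farthest_dist_def image_Un
  using cSup_union_distrib[of "(\<lambda>y. norm (x - y)) ` F1" "(\<lambda>y. norm (x - y)) ` F2"]
    bdd_above_norm_diff_image[OF assms(3)] bdd_above_norm_diff_image[OF assms(4)] assms(1,2)
  by (simp add: sup_max)

lemma farpts_mono: "\<delta> \<le> \<delta>' \<Longrightarrow> farpts F x \<delta> \<subseteq> farpts F x \<delta>'"
  unfolding farpts_def by auto

lemma enlarge_mono: "S \<subseteq> T \<Longrightarrow> enlarge S \<epsilon> \<subseteq> enlarge T \<epsilon>"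
  unfolding enlarge_def by blast

lemma farpts_Un_dominated:
  fixes F1 F2 :: "'a::real_normed_vector set"
  assumes "F1 \<noteq> {}" "F2 \<noteq> {}" "bounded F1" "bounded F2"
    and "0 \<le> \<delta>" "\<delta> < farthest_dist F1 x - farthest_dist F2 x"
  shows "farpts (F1 \<union> F2) x \<delta> = farpts F1 x \<delta>"
proof -
  have radius: "farthest_dist (F1 \<union> F2) x = farthest_dist F1 x"
    using farthest_dist_Un[OF assms(1-4)] assms(5,6) by simp
  have "norm (x - y) < farthest_dist F1 x - \<delta>" if "y \<in> F2" for y
    using norm_diff_le_farthest_dist[OF assms(4) that, of x] assms(6) by linarith
  then show ?thesis unfolding farpts_def radius by force
qed

lemma farpts_Un_equal_radius:
  fixes F1 F2 :: "'a::real_normed_vector set"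
  assumes "F1 \<noteq> {}" "F2 \<noteq> {}" "bounded F1" "bounded F2"
    and "farthest_dist F1 x = farthest_dist F2 x"
  shows "farpts (F1 \<union> F2) x \<delta> = farpts F1 x \<delta> \<union> farpts F2 x \<delta>"
proof -
  have "farthest_dist (F1 \<union> F2) x = farthest_dist F1 x"
    using farthest_dist_Un[OF assms(1-4)] assms(5) by simp
  then show ?thesis unfolding farpts_def using assms(5) by auto
qed

lemma sup_compact_on_frequently_in_subset:
  fixes F G :: "'a::real_normed_vector set"
  assumes "sup_compact_on G A" "x \<in> A" "G \<subseteq> F"
    and "farthest_dist G x = farthest_dist F x"
    and "(\<lambda>n. norm (x - y n)) \<longlonglongrightarrow> farthest_dist F x"
    and "\<exists>\<^sub>F n in sequentially. y n \<in> G"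
  shows "\<exists>g z. strict_mono g \<and> z \<in> F \<and> (y \<circ> g) \<longlonglongrightarrow> z"
proof -
  have "infinite {n. y n \<in> G}"
    using assms(6) by (simp add: frequently_cofinite flip: cofinite_eq_sequentially)
  then obtain h :: "nat \<Rightarrow> nat" where h: "strict_mono h" "\<forall>n. y (h n) \<in> G"
    using infinite_enumerate by blast
  have "(\<lambda>n. norm (x - (y \<circ> h) n)) \<longlonglongrightarrow> farthest_dist G x"
    using LIMSEQ_subseq_LIMSEQ[OF assms(5) h(1)] assms(4) by (simp add: o_def)
  then obtain g z where g: "strict_mono g" "z \<in> G" "(y \<circ> h \<circ> g) \<longlonglongrightarrow> z"
    using assms(1,2) h(2) unfolding sup_compact_on_def by (metis comp_apply)
  have "strict_mono (h \<circ> g)" using g(1) h(1) by (simp add: strict_mono_o)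
  then show ?thesis using g assms(3) by (metis comp_assoc subsetD)
qed

lemma remotal_on_Un_dominated:
  fixes F1 F2 :: "'a::real_normed_vector set"
  assumes "F1 \<noteq> {}" "F2 \<noteq> {}" "bounded F1" "bounded F2"
    and "\<forall>x\<in>A. farthest_dist F1 x > farthest_dist F2 x"
    and "remotal_on F1 A"
  shows "remotal_on (F1 \<union> F2) A"
  using assms farpts_Un_dominated[OF assms(1-4) order_refl] by (simp add: remotal_on_def)

lemma uniquely_remotal_on_Un_dominated:
  fixes F1 F2 :: "'a::real_normed_vector set"
  assumes "F1 \<noteq> {}" "F2 \<noteq> {}" "bounded F1" "bounded F2"
    and "\<forall>x\<in>A. farthest_dist F1 x > farthest_dist F2 x"
    and "uniquely_remotal_on F1 A"
  shows "uniquely_remotal_on (F1 \<union> F2) A"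
  using assms farpts_Un_dominated[OF assms(1-4) order_refl] by (simp add: uniquely_remotal_on_def)

lemma farpts_Un_dominated_enlarge:
  fixes F1 F2 :: "'a::real_normed_vector set"
  assumes "F1 \<noteq> {}" "F2 \<noteq> {}" "bounded F1" "bounded F2"
    and "0 < \<delta>'" "\<delta>' \<le> \<delta>" "\<delta>' < farthest_dist F1 x - farthest_dist F2 x"
    and "farpts F1 x \<delta> \<subseteq> enlarge (farpts F1 x 0) \<epsilon>"
  shows "farpts (F1 \<union> F2) x \<delta>' \<subseteq> enlarge (farpts (F1 \<union> F2) x 0) \<epsilon>"
proof -
  have "farpts (F1 \<union> F2) x \<delta>' = farpts F1 x \<delta>'"
    using farpts_Un_dominated[OF assms(1-4)] assms(5,7) by simp
  moreover have "farpts (F1 \<union> F2) x 0 = farpts F1 x 0"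
    using farpts_Un_dominated[OF assms(1-4)] assms(5,7) by simp
  ultimately show ?thesis using farpts_mono[OF assms(6), of F1 x] assms(8) by simp
qed

lemma strongly_remotal_on_Un_dominated:
  fixes F1 F2 :: "'a::real_normed_vector set"
  assumes "F1 \<noteq> {}" "F2 \<noteq> {}" "bounded F1" "bounded F2"
    and gt: "\<forall>x\<in>A. farthest_dist F1 x > farthest_dist F2 x"
    and "strongly_remotal_on F1 A"
  shows "strongly_remotal_on (F1 \<union> F2) A"
  unfolding strongly_remotal_on_def
proof (intro ballI allI impI)
  fix x and \<epsilon> :: real
  assume x: "x \<in> A" and "\<epsilon> > 0"
  then obtain \<delta> where \<delta>: "\<delta> > 0" "farpts F1 x \<delta> \<subseteq> enlarge (farpts F1 x 0) \<epsilon>"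
    using assms(6) unfolding strongly_remotal_on_def by blast
  have "farthest_dist F1 x - farthest_dist F2 x > 0" using gt x by simp
  define \<delta>' where "\<delta>' = min \<delta> ((farthest_dist F1 x - farthest_dist F2 x) / 2)"
  have "0 < \<delta>'" "\<delta>' \<le> \<delta>" "\<delta>' < farthest_dist F1 x - farthest_dist F2 x"
    using \<delta>(1) \<open>farthest_dist F1 x - farthest_dist F2 x > 0\<close> unfolding \<delta>'_def
    by (auto simp: min_less_iff_disj)
  then show "\<exists>\<delta>>0. farpts (F1 \<union> F2) x \<delta> \<subseteq> enlarge (farpts (F1 \<union> F2) x 0) \<epsilon>"
    using farpts_Un_dominated_enlarge[OF assms(1-4) _ _ _ \<delta>(2)] by meson
qed

lemma SUR_on_Un_dominated:
  fixes F1 F2 :: "'a::real_normed_vector set"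
  assumes "F1 \<noteq> {}" "F2 \<noteq> {}" "bounded F1" "bounded F2"
    and "\<forall>x\<in>A. farthest_dist F1 x > farthest_dist F2 x"
    and "SUR_on F1 A"
  shows "SUR_on (F1 \<union> F2) A"
  using uniquely_remotal_on_Un_dominated[OF assms(1-5)]
    strongly_remotal_on_Un_dominated[OF assms(1-5)] assms(6)
  unfolding SUR_on_def by blast

lemma USUR_on_Un_uniformly_dominated:
  fixes F1 F2 :: "'a::real_normed_vector set"
  assumes "F1 \<noteq> {}" "F2 \<noteq> {}" "bounded F1" "bounded F2"
    and gap: "(INF x\<in>A. farthest_dist F1 x - farthest_dist F2 x) > 0"
    and gt: "\<forall>x\<in>A. farthest_dist F1 x > farthest_dist F2 x"
    and "USUR_on F1 A"
  shows "USUR_on (F1 \<union> F2) A"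
proof -
  define m where "m = (INF x\<in>A. farthest_dist F1 x - farthest_dist F2 x)"
  have "bdd_below ((\<lambda>x. farthest_dist F1 x - farthest_dist F2 x) ` A)"
    using gt by (intro bdd_belowI[of _ 0]) force
  then have m_le_gap: "m \<le> farthest_dist F1 x - farthest_dist F2 x" if "x \<in> A" for x
    unfolding m_def using that by (rule cINF_lower)
  have "\<exists>\<delta>'>0. \<forall>x\<in>A. farpts (F1 \<union> F2) x \<delta>' \<subseteq> enlarge (farpts (F1 \<union> F2) x 0) \<epsilon>"
    if "\<epsilon> > 0" for \<epsilon>
  proof -
    obtain \<delta> where \<delta>: "\<delta> > 0" "\<forall>x\<in>A. farpts F1 x \<delta> \<subseteq> enlarge (farpts F1 x 0) \<epsilon>"
      using assms(7) \<open>\<epsilon> > 0\<close> unfolding USUR_on_def by blast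
    define \<delta>' where "\<delta>' = min \<delta> (m / 2)"
    have "m > 0" using gap unfolding m_def .
    then have \<delta>': "0 < \<delta>'" "\<delta>' \<le> \<delta>" "\<delta>' < m"
      using \<delta>(1) unfolding \<delta>'_def by (auto simp: min_less_iff_disj)
    have "farpts (F1 \<union> F2) x \<delta>' \<subseteq> enlarge (farpts (F1 \<union> F2) x 0) \<epsilon>" if "x \<in> A" for x
    proof (rule farpts_Un_dominated_enlarge[OF assms(1-4) \<delta>'(1,2)])
      show "\<delta>' < farthest_dist F1 x - farthest_dist F2 x"
        using \<delta>'(3) m_le_gap[OF that] by linarith
      show "farpts F1 x \<delta> \<subseteq> enlarge (farpts F1 x 0) \<epsilon>"
        using \<delta>(2) that by blast
    qed
    then show ?thesis using \<delta>'(1) by blast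
  qed
  moreover have "uniquely_remotal_on (F1 \<union> F2) A"
    using uniquely_remotal_on_Un_dominated[OF assms(1-4) gt] assms(7) by (simp add: USUR_on_def)
  ultimately show ?thesis unfolding USUR_on_def by blast
qed

lemma sup_compact_on_Un_dominated:
  fixes F1 F2 :: "'a::real_normed_vector set"
  assumes "F1 \<noteq> {}" "F2 \<noteq> {}" "bounded F1" "bounded F2"
    and gt: "\<forall>x\<in>A. farthest_dist F1 x > farthest_dist F2 x"
    and "sup_compact_on F1 A"
  shows "sup_compact_on (F1 \<union> F2) A"
  unfolding sup_compact_on_def
proof (intro ballI allI impI)
  fix x and y :: "nat \<Rightarrow> 'a"
  assume x: "x \<in> A"
    and y: "(\<forall>n. y n \<in> F1 \<union> F2) \<and> (\<lambda>n. norm (x - y n)) \<longlonglongrightarrow> farthest_dist (F1 \<union> F2) x"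
  have gt_x: "farthest_dist F2 x < farthest_dist F1 x" using gt x by blast
  then have radius: "farthest_dist F1 x = farthest_dist (F1 \<union> F2) x"
    using farthest_dist_Un[OF assms(1-4), of x] by simp
  have "\<forall>\<^sub>F n in sequentially. farthest_dist F2 x < norm (x - y n)"
    using order_tendstoD(1)[OF conjunct2[OF y]] gt_x radius by simp
  moreover have "y n \<in> F1" if "farthest_dist F2 x < norm (x - y n)" for n
    using y that norm_diff_le_farthest_dist[OF assms(4), of "y n" x] by auto
  ultimately have "\<forall>\<^sub>F n in sequentially. y n \<in> F1"
    by (rule eventually_mono)
  then have "\<exists>\<^sub>F n in sequentially. y n \<in> F1"
    by (rule eventually_frequently[OF trivial_limit_sequentially])
  then show "\<exists>g z. strict_mono g \<and> z \<in> F1 \<union> F2 \<and> (y \<circ> g) \<longlonglongrightarrow> z"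
    using sup_compact_on_frequently_in_subset[OF assms(6) x Un_upper1 radius] y by simp
qed

lemma sup_compact_on_Un_equal_radius:
  fixes F1 F2 :: "'a::real_normed_vector set"
  assumes "F1 \<noteq> {}" "F2 \<noteq> {}" "bounded F1" "bounded F2"
    and eq: "\<forall>x\<in>A. farthest_dist F1 x = farthest_dist F2 x"
    and "sup_compact_on F1 A" "sup_compact_on F2 A"
  shows "sup_compact_on (F1 \<union> F2) A"
  unfolding sup_compact_on_def
proof (intro ballI allI impI)
  fix x and y :: "nat \<Rightarrow> 'a"
  assume x: "x \<in> A"
    and y: "(\<forall>n. y n \<in> F1 \<union> F2) \<and> (\<lambda>n. norm (x - y n)) \<longlonglongrightarrow> farthest_dist (F1 \<union> F2) x"
  have radius: "farthest_dist F1 x = farthest_dist (F1 \<union> F2) x"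
    "farthest_dist F2 x = farthest_dist (F1 \<union> F2) x"
    using farthest_dist_Un[OF assms(1-4), of x] eq x by auto
  have "\<exists>\<^sub>F n in sequentially. y n \<in> F1 \<or> y n \<in> F2"
    using y by (simp add: eventually_frequently)
  then consider "\<exists>\<^sub>F n in sequentially. y n \<in> F1" | "\<exists>\<^sub>F n in sequentially. y n \<in> F2"
    unfolding frequently_disj_iff by blast
  then show "\<exists>g z. strict_mono g \<and> z \<in> F1 \<union> F2 \<and> (y \<circ> g) \<longlonglongrightarrow> z"
    using sup_compact_on_frequently_in_subset[OF assms(6) x _ radius(1)]
      sup_compact_on_frequently_in_subset[OF assms(7) x _ radius(2)] y
    by cases auto
qed

lemma strongly_remotal_on_Un_equal_radius:
  fixes F1 F2 :: "'a::real_normed_vector set"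
  assumes "F1 \<noteq> {}" "F2 \<noteq> {}" "bounded F1" "bounded F2"
    and eq: "\<forall>x\<in>A. farthest_dist F1 x = farthest_dist F2 x"
    and "strongly_remotal_on F1 A" "strongly_remotal_on F2 A"
  shows "strongly_remotal_on (F1 \<union> F2) A"
  unfolding strongly_remotal_on_def
proof (intro ballI allI impI)
  fix x and \<epsilon> :: real
  assume x: "x \<in> A" and "\<epsilon> > 0"
  then obtain \<delta>1 \<delta>2 where "\<delta>1 > 0" "farpts F1 x \<delta>1 \<subseteq> enlarge (farpts F1 x 0) \<epsilon>"
    and "\<delta>2 > 0" "farpts F2 x \<delta>2 \<subseteq> enlarge (farpts F2 x 0) \<epsilon>"
    using assms(6,7) unfolding strongly_remotal_on_def by meson
  moreover have "farpts (F1 \<union> F2) x \<delta> = farpts F1 x \<delta> \<union> farpts F2 x \<delta>" for \<delta>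
    using farpts_Un_equal_radius[OF assms(1-4)] eq x by blast
  ultimately have "farpts (F1 \<union> F2) x (min \<delta>1 \<delta>2) \<subseteq> enlarge (farpts (F1 \<union> F2) x 0) \<epsilon>"
    using farpts_mono[of "min \<delta>1 \<delta>2" \<delta>1 F1 x] farpts_mono[of "min \<delta>1 \<delta>2" \<delta>2 F2 x]
      enlarge_mono[of "farpts F1 x 0" "farpts (F1 \<union> F2) x 0" \<epsilon>]
      enlarge_mono[of "farpts F2 x 0" "farpts (F1 \<union> F2) x 0" \<epsilon>]
    by auto
  then show "\<exists>\<delta>>0. farpts (F1 \<union> F2) x \<delta> \<subseteq> enlarge (farpts (F1 \<union> F2) x 0) \<epsilon>"
    using \<open>\<delta>1 > 0\<close> \<open>\<delta>2 > 0\<close> by (metis min_less_iff_conj)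
qed

lemma remotal_on_Un_equal_radius:
  fixes F1 F2 :: "'a::real_normed_vector set"
  assumes "F1 \<noteq> {}" "F2 \<noteq> {}" "bounded F1" "bounded F2"
    and "\<forall>x\<in>A. farthest_dist F1 x = farthest_dist F2 x"
    and "remotal_on F1 A"
  shows "remotal_on (F1 \<union> F2) A"
  using assms farpts_Un_equal_radius[OF assms(1-4)] by (simp add: remotal_on_def)

theorem theorem2p10:
  fixes A F1 F2 :: "'a::banach set"
  assumes "A \<noteq> {}"
    and "F1 \<noteq> {}" "closed F1" "bounded F1"
    and "F2 \<noteq> {}" "closed F2" "bounded F2"
  shows
    "((\<forall>x\<in>A. farthest_dist F1 x > farthest_dist F2 x) \<longrightarrow>
        (remotal_on F1 A \<longrightarrow> remotal_on (F1 \<union> F2) A) \<and>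
        (uniquely_remotal_on F1 A \<longrightarrow> uniquely_remotal_on (F1 \<union> F2) A) \<and>
        (strongly_remotal_on F1 A \<longrightarrow> strongly_remotal_on (F1 \<union> F2) A) \<and>
        (SUR_on F1 A \<longrightarrow> SUR_on (F1 \<union> F2) A) \<and>
        (sup_compact_on F1 A \<longrightarrow> sup_compact_on (F1 \<union> F2) A) \<and>
        ((INF x\<in>A. farthest_dist F1 x - farthest_dist F2 x) > 0 \<and> USUR_on F1 A
           \<longrightarrow> USUR_on (F1 \<union> F2) A))
     \<and>
     ((\<forall>x\<in>A. farthest_dist F1 x = farthest_dist F2 x) \<longrightarrow>
        (sup_compact_on F1 A \<and> sup_compact_on F2 A \<longrightarrow> sup_compact_on (F1 \<union> F2) A) \<and>
        (strongly_remotal_on F1 A \<and> strongly_remotal_on F2 A \<longrightarrow> strongly_remotal_on (F1 \<union> F2) A) \<and>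
        (remotal_on F1 A \<and> remotal_on F2 A \<longrightarrow> remotal_on (F1 \<union> F2) A))"
proof (intro conjI impI)
  note sets = assms(2,5,4,7)
  assume dominated: "\<forall>x\<in>A. farthest_dist F1 x > farthest_dist F2 x"
  show "remotal_on F1 A \<Longrightarrow> remotal_on (F1 \<union> F2) A"
    by (rule remotal_on_Un_dominated[OF sets dominated])
  show "uniquely_remotal_on F1 A \<Longrightarrow> uniquely_remotal_on (F1 \<union> F2) A"
    by (rule uniquely_remotal_on_Un_dominated[OF sets dominated])
  show "strongly_remotal_on F1 A \<Longrightarrow> strongly_remotal_on (F1 \<union> F2) A"
    by (rule strongly_remotal_on_Un_dominated[OF sets dominated])
  show "SUR_on F1 A \<Longrightarrow> SUR_on (F1 \<union> F2) A"
    by (rule SUR_on_Un_dominated[OF sets dominated])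
  show "sup_compact_on F1 A \<Longrightarrow> sup_compact_on (F1 \<union> F2) A"
    by (rule sup_compact_on_Un_dominated[OF sets dominated])
  show "(INF x\<in>A. farthest_dist F1 x - farthest_dist F2 x) > 0 \<and> USUR_on F1 A
      \<Longrightarrow> USUR_on (F1 \<union> F2) A"
    using USUR_on_Un_uniformly_dominated[OF sets _ dominated] by blast
next
  note sets = assms(2,5,4,7)
  assume equal: "\<forall>x\<in>A. farthest_dist F1 x = farthest_dist F2 x"
  show "sup_compact_on F1 A \<and> sup_compact_on F2 A \<Longrightarrow> sup_compact_on (F1 \<union> F2) A"
    using sup_compact_on_Un_equal_radius[OF sets equal] by blast
  show "strongly_remotal_on F1 A \<and> strongly_remotal_on F2 A
      \<Longrightarrow> strongly_remotal_on (F1 \<union> F2) A"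
    using strongly_remotal_on_Un_equal_radius[OF sets equal] by blast
  show "remotal_on F1 A \<and> remotal_on F2 A \<Longrightarrow> remotal_on (F1 \<union> F2) A"
    using remotal_on_Un_equal_radius[OF sets equal] by blast
qed

end
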